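(* Let $\mathbf X$ be a compact metric space and $Y>0$. Consider the on-line regression protocol in which, at each round $n=1,2,\dots$, Reality announces a signal $x_n\in\mathbf X$, then Predictor announces a prediction $\mu_n\in\mathbb R$, then Reality announces an observation $y_n\in[-Y,Y]$. There exists a strategy for Predictor which guarantees that, for every continuous function $F:\mathbf X\to\mathbb R$ and every sequence of moves of Reality, $$\limsup_{N\to\infty}\left(\frac1N\sum_{n=1}^N (y_n-\mu_n)^2-\frac1N\sum_{n=1}^N (y_n-F(x_n))^2\right)\le 0 .$$
   Context: A strategy for Predictor is a function mapping each finite history $(x_1,y_1,\dots,x_{n-1},y_{n-1},x_n)$ to the prediction $\mu_n$; Reality may choose its moves adaptively, and the guarantee must hold for all such choices. *)

theory Defs
  imports "HOL-Analysis.Analysis" "HOL-Library.Liminf_Limsup"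
begin

text \<open>A Predictor strategy maps the finite history ((x_1,y_1),...,(x_{n-1},y_{n-1}))
  (as a list, oldest first) and the current signal x_n to the prediction mu_n.\<close>
type_synonym 'a predictor = "('a \<times> real) list \<Rightarrow> 'a \<Rightarrow> real"

definition pred_at :: "'a predictor \<Rightarrow> (nat \<Rightarrow> 'a) \<Rightarrow> (nat \<Rightarrow> real) \<Rightarrow> nat \<Rightarrow> real" where
  "pred_at P x y n = P (map (\<lambda>i. (x i, y i)) [0..<n]) (x n)"

end

theory Submission
  imports Defs
begin

text \<open>Predictor runs Vovk's Aggregating Algorithm over a countable family of experts that is
  uniformly dense in the continuous functions on \<open>X\<close>, clipped to \<open>[-Y, Y]\<close>. For
  \<open>\<eta> = 1/(64 Y\<^sup>2)\<close> the square loss on \<open>[-Y, Y]\<close> is \<open>\<eta>\<close>-mixable with the weighted mean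
  as merged prediction, so the total weight, initially \<open>1\<close>, stays below \<open>exp (-\<eta> L\<^sub>N)\<close>, while it
  is at least \<open>2^(-(k+1)) exp (-\<eta> L\<^sub>N(k))\<close>. Hence the loss \<open>L\<^sub>N\<close> of Predictor exceeds the loss
  \<open>L\<^sub>N(k)\<close> of expert \<open>k\<close> by at most the constant \<open>(k + 1) ln 2 / \<eta>\<close>. An expert within \<open>\<delta>\<close> of
  \<open>F\<close> on \<open>X\<close> loses only \<open>O(\<delta>)\<close> more than \<open>F\<close> per round, so the limsup of the average
  regret is \<open>O(\<delta>)\<close> for every \<open>\<delta> > 0\<close>.\<close>

lemma exp_le_one_add_self_add_square:
  fixes u :: real
  assumes "u \<le> 1"
  shows "exp u \<le> 1 + u + u^2"
proof (cases "0 \<le> u")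
  case True
  then show ?thesis using exp_bound assms by blast
next
  case False
  have "exp u * (1 - u) \<le> 1"
    using exp_ge_add_one_self[of "- u"] by (simp add: exp_minus field_simps)
  also have "1 \<le> (1 + u + u^2) * (1 - u)"
    using False mult_nonpos_nonneg[of u "u^2"] by (simp add: algebra_simps power2_eq_square)
  finally show ?thesis
    using False by (simp add: mult_le_cancel_right)
qed

lemma exp_neg_square_loss_le_tangent:
  fixes \<eta> Y y p m :: real
  assumes \<eta>: "0 \<le> \<eta>" "64 * \<eta> * Y^2 \<le> 1"
    and bounds: "\<bar>p\<bar> \<le> Y" "\<bar>m\<bar> \<le> Y" "\<bar>y\<bar> \<le> Y"
  shows "exp (- \<eta> * (y - p)^2) \<le> exp (- \<eta> * (y - m)^2) * (1 + 2 * \<eta> * (y - m) * (p - m))"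
proof -
  define a t where "a = y - m" and "t = p - m"
  define u where "u = 2 * \<eta> * a * t"
  have a: "\<bar>a\<bar> \<le> 2 * Y" and t: "\<bar>t\<bar> \<le> 2 * Y"
    using bounds by (auto simp: a_def t_def)
  have at: "\<bar>a * t\<bar> \<le> 4 * Y^2" and a2: "a^2 \<le> 4 * Y^2"
    using mult_mono[OF a t] abs_le_square_iff[of a "2 * Y"] a by (auto simp: abs_mult power2_eq_square)
  have "\<bar>u\<bar> = 2 * \<eta> * \<bar>a * t\<bar>"
    using \<eta> by (simp add: u_def abs_mult)
  also have "\<dots> \<le> 2 * \<eta> * (4 * Y^2)"
    using at \<eta> by (intro mult_left_mono) auto
  also have "\<dots> \<le> 1/8"
    using \<eta> by linarith
  finally have u: "\<bar>u\<bar> \<le> 1/8" .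
  have "u^2 = 4 * \<eta>^2 * a^2 * t^2" by (simp add: u_def power_mult_distrib)
  also have "\<dots> \<le> 4 * \<eta>^2 * (4 * Y^2) * t^2"
    using a2 by (intro mult_right_mono mult_left_mono) auto
  also have "\<dots> = (64 * \<eta> * Y^2) * (\<eta> * t^2) / 4" by (simp add: power2_eq_square)
  also have "\<dots> \<le> \<eta> * t^2 / 4"
    using \<eta> by (intro divide_right_mono mult_left_le_one_le) auto
  finally have u2: "u^2 \<le> \<eta> * t^2 / 4" .
  \<comment> \<open>The quadratic error term of \<open>exp u\<close> is absorbed by the factor \<open>exp (\<eta> t\<^sup>2)\<close>.\<close>
  have "exp u \<le> 1 + u + u^2"
    using u by (intro exp_le_one_add_self_add_square) auto
  also have "\<dots> \<le> (1 + u) * (1 + \<eta> * t^2)"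
  proof -
    have "(1/4) * (\<eta> * t^2) \<le> (1 + u) * (\<eta> * t^2)"
      using u \<eta> by (intro mult_right_mono) auto
    with u2 show ?thesis by (simp add: algebra_simps)
  qed
  also have "\<dots> \<le> (1 + u) * exp (\<eta> * t^2)"
    using u by (intro mult_left_mono exp_ge_add_one_self) auto
  finally have key: "exp (u - \<eta> * t^2) \<le> 1 + u"
    by (simp add: exp_diff pos_divide_le_eq)
  have "- \<eta> * (y - p)^2 = - \<eta> * a^2 + (u - \<eta> * t^2)"
    by (simp add: a_def t_def u_def power2_eq_square algebra_simps)
  then have "exp (- \<eta> * (y - p)^2) = exp (- \<eta> * a^2) * exp (u - \<eta> * t^2)"
    by (metis exp_add)
  also have "\<dots> \<le> exp (- \<eta> * a^2) * (1 + u)"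
    using key by (intro mult_left_mono) auto
  finally show ?thesis by (simp add: a_def t_def u_def mult.assoc)
qed

lemma summable_mult_bounded:
  fixes w p :: "nat \<Rightarrow> real"
  assumes "\<And>k. 0 \<le> w k" "summable w" "\<And>k. \<bar>p k\<bar> \<le> Y"
  shows "summable (\<lambda>k. w k * p k)"
proof (rule summable_comparison_test'[OF summable_mult[OF assms(2), of Y]])
  fix k
  show "norm (w k * p k) \<le> Y * w k"
    using mult_left_mono[OF assms(3) assms(1)] by (simp add: abs_mult assms(1) mult.commute)
qed

lemma weighted_mean_abs_le:
  fixes w p :: "nat \<Rightarrow> real"
  assumes w: "\<And>k. 0 \<le> w k" "summable w" and p: "\<And>k. \<bar>p k\<bar> \<le> Y"
  shows "\<bar>(\<Sum>k. w k * p k) / (\<Sum>k. w k)\<bar> \<le> Y"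
proof (cases "(\<Sum>k. w k) = 0")
  case True
  then show ?thesis using abs_ge_zero[of "p 0"] p[of 0] by simp
next
  case False
  then have S: "0 < (\<Sum>k. w k)"
    using suminf_nonneg[OF w(2) w(1)] by linarith
  have wp: "summable (\<lambda>k. \<bar>w k * p k\<bar>)"
    using summable_mult_bounded[OF w, of "\<lambda>k. \<bar>p k\<bar>" Y] p w(1) by (simp add: abs_mult)
  have "\<bar>\<Sum>k. w k * p k\<bar> \<le> (\<Sum>k. \<bar>w k * p k\<bar>)"
    by (rule summable_rabs[OF wp])
  also have "\<dots> \<le> (\<Sum>k. Y * w k)"
  proof (rule suminf_le[OF _ wp summable_mult[OF w(2)]])
    show "\<bar>w k * p k\<bar> \<le> Y * w k" for k
      using mult_left_mono[OF p w(1)] w(1) by (simp add: abs_mult mult.commute)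
  qed
  also have "\<dots> = Y * (\<Sum>k. w k)"
    using w(2) by (rule suminf_mult)
  finally show ?thesis
    using S by (simp add: abs_divide pos_divide_le_eq)
qed

text \<open>The weighted mean of the predictions \<open>p k\<close> is a valid merged prediction for the weights \<open>w\<close>
  (the square loss is \<open>\<eta>\<close>-mixable): the linear term of the tangent bound averages out.\<close>
lemma mixture_exp_square_loss_le:
  fixes w p :: "nat \<Rightarrow> real"
  assumes \<eta>: "0 \<le> \<eta>" "64 * \<eta> * Y^2 \<le> 1"
    and w: "\<And>k. 0 \<le> w k" "summable w" and p: "\<And>k. \<bar>p k\<bar> \<le> Y" and y: "\<bar>y\<bar> \<le> Y"
  defines "\<mu> \<equiv> (\<Sum>k. w k * p k) / (\<Sum>k. w k)"
  shows "(\<Sum>k. w k * exp (- \<eta> * (y - p k)^2)) \<le> exp (- \<eta> * (y - \<mu>)^2) * (\<Sum>k. w k)"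
proof -
  have \<mu>: "\<bar>\<mu>\<bar> \<le> Y"
    unfolding \<mu>_def using w p by (rule weighted_mean_abs_le)
  have mean: "(\<Sum>k. w k * p k) = \<mu> * (\<Sum>k. w k)"
  proof (cases "(\<Sum>k. w k) = 0")
    case True
    then show ?thesis using suminf_eq_zero_iff[OF w(2)] w(1) by simp
  qed (simp add: \<mu>_def)
  define c d where "c = exp (- \<eta> * (y - \<mu>)^2)" and "d = 2 * \<eta> * (y - \<mu>) * c"
  have "(\<lambda>k. c * w k + d * (w k * p k) - d * \<mu> * w k)
          sums (c * (\<Sum>k. w k) + d * (\<Sum>k. w k * p k) - d * \<mu> * (\<Sum>k. w k))"
    using w p by (intro sums_diff sums_add sums_mult summable_sums summable_mult_bounded)
  also have "c * (\<Sum>k. w k) + d * (\<Sum>k. w k * p k) - d * \<mu> * (\<Sum>k. w k) = c * (\<Sum>k. w k)"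
    by (simp add: mean)
  finally have rhs: "(\<lambda>k. c * w k + d * (w k * p k) - d * \<mu> * w k) sums (c * (\<Sum>k. w k))" .
  have lhs: "summable (\<lambda>k. w k * exp (- \<eta> * (y - p k)^2))"
    using w \<eta> by (intro summable_mult_bounded[where Y = 1]) auto
  have "w k * exp (- \<eta> * (y - p k)^2) \<le> c * w k + d * (w k * p k) - d * \<mu> * w k" for k
  proof -
    have "w k * exp (- \<eta> * (y - p k)^2) \<le> w k * (c * (1 + 2 * \<eta> * (y - \<mu>) * (p k - \<mu>)))"
      unfolding c_def using \<eta> p \<mu> y w(1) by (intro mult_left_mono exp_neg_square_loss_le_tangent)
    then show ?thesis by (simp add: d_def algebra_simps)
  qed
  then show ?thesis
    using sums_le[OF _ summable_sums[OF lhs] rhs] by (simp add: c_def)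
qed

definition aa_weight :: "real \<Rightarrow> (nat \<Rightarrow> 'a \<Rightarrow> real) \<Rightarrow> ('a \<times> real) list \<Rightarrow> nat \<Rightarrow> real" where
  "aa_weight \<eta> e h k = (1/2)^Suc k * exp (- \<eta> * (\<Sum>(z, v)\<leftarrow>h. (v - e k z)^2))"

definition aggregating_predictor :: "real \<Rightarrow> (nat \<Rightarrow> 'a \<Rightarrow> real) \<Rightarrow> 'a predictor" where
  "aggregating_predictor \<eta> e h z = (\<Sum>k. aa_weight \<eta> e h k * e k z) / (\<Sum>k. aa_weight \<eta> e h k)"

lemma aa_weight_nonneg: "0 \<le> aa_weight \<eta> e h k"
  by (simp add: aa_weight_def)

lemma summable_aa_weight:
  assumes "0 \<le> \<eta>"
  shows "summable (aa_weight \<eta> e h)"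
proof (rule summable_comparison_test'[OF sums_summable[OF power_half_series]])
  have "0 \<le> (\<Sum>(z, v)\<leftarrow>h. (v - e k z)^2)" for k
    by (rule sum_list_nonneg) auto
  with assms show "norm (aa_weight \<eta> e h k) \<le> (1/2)^Suc k" for k
    by (simp add: aa_weight_def mult_nonneg_nonneg del: power_Suc)
qed

lemma suminf_aa_weight_Nil: "(\<Sum>k. aa_weight \<eta> e [] k) = 1"
  using power_half_series by (simp add: aa_weight_def sums_iff del: power_Suc)

lemma aa_weight_snoc:
  "aa_weight \<eta> e (h @ [(z, v)]) k = aa_weight \<eta> e h k * exp (- \<eta> * (v - e k z)^2)"
  by (simp add: aa_weight_def algebra_simps exp_add[symmetric])

lemma aa_weight_history:
  "aa_weight \<eta> e (map (\<lambda>i. (x i, y i)) [0..<N]) k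
     = (1/2)^Suc k * exp (- \<eta> * (\<Sum>n<N. (y n - e k (x n))^2))"
  by (simp add: aa_weight_def o_def sum_set_upt_conv_sum_list_nat[symmetric] atLeast0LessThan)

lemma suminf_aa_weight_le:
  assumes \<eta>: "0 \<le> \<eta>" "64 * \<eta> * Y^2 \<le> 1"
    and e: "\<And>k z. \<bar>e k z\<bar> \<le> Y" and y: "\<And>n. \<bar>y n\<bar> \<le> Y"
  shows "(\<Sum>k. aa_weight \<eta> e (map (\<lambda>i. (x i, y i)) [0..<N]) k)
           \<le> exp (- \<eta> * (\<Sum>n<N. (y n - pred_at (aggregating_predictor \<eta> e) x y n)^2))"
proof (induction N)
  case 0
  show ?case by (simp add: suminf_aa_weight_Nil)
next
  case (Suc N)
  define h where "h = map (\<lambda>i. (x i, y i)) [0..<N]"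
  define \<mu> where "\<mu> = pred_at (aggregating_predictor \<eta> e) x y N"
  have "(\<Sum>k. aa_weight \<eta> e (h @ [(x N, y N)]) k)
          = (\<Sum>k. aa_weight \<eta> e h k * exp (- \<eta> * (y N - e k (x N))^2))"
    by (simp add: aa_weight_snoc)
  also have "\<dots> \<le> exp (- \<eta> * (y N - \<mu>)^2) * (\<Sum>k. aa_weight \<eta> e h k)"
    unfolding \<mu>_def pred_at_def aggregating_predictor_def h_def
    using \<eta> e y aa_weight_nonneg summable_aa_weight
    by (intro mixture_exp_square_loss_le) auto
  also have "\<dots> \<le> exp (- \<eta> * (y N - \<mu>)^2)
                   * exp (- \<eta> * (\<Sum>n<N. (y n - pred_at (aggregating_predictor \<eta> e) x y n)^2))"
    using Suc.IH by (simp add: h_def)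
  finally show ?case
    by (simp add: h_def \<mu>_def algebra_simps exp_add[symmetric])
qed

lemma aggregating_predictor_regret:
  assumes \<eta>: "0 < \<eta>" "64 * \<eta> * Y^2 \<le> 1"
    and e: "\<And>k z. \<bar>e k z\<bar> \<le> Y" and y: "\<And>n. \<bar>y n\<bar> \<le> Y"
  shows "(\<Sum>n<N. (y n - pred_at (aggregating_predictor \<eta> e) x y n)^2)
           \<le> (\<Sum>n<N. (y n - e k (x n))^2) + real (Suc k) * ln 2 / \<eta>"
proof -
  define L where "L = (\<Sum>n<N. (y n - pred_at (aggregating_predictor \<eta> e) x y n)^2)"
  define Lk where "Lk = (\<Sum>n<N. (y n - e k (x n))^2)"
  define h where "h = map (\<lambda>i. (x i, y i)) [0..<N]"
  have "(1/2)^Suc k * exp (- \<eta> * Lk) = aa_weight \<eta> e h k"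
    by (simp add: aa_weight_history h_def Lk_def)
  also have "\<dots> \<le> (\<Sum>k. aa_weight \<eta> e h k)"
    using sum_le_suminf[OF summable_aa_weight, of \<eta> "{k}" e h] \<eta> aa_weight_nonneg by auto
  also have "\<dots> \<le> exp (- \<eta> * L)"
    unfolding h_def L_def using \<eta> e y by (intro suminf_aa_weight_le) auto
  finally have "ln ((1/2)^Suc k * exp (- \<eta> * Lk)) \<le> ln (exp (- \<eta> * L))"
    by (subst ln_le_cancel_iff) auto
  then have "\<eta> * L \<le> \<eta> * Lk + real (Suc k) * ln 2"
    by (simp add: ln_mult ln_realpow ln_div algebra_simps del: power_Suc)
  with \<eta> show ?thesis
    unfolding L_def[symmetric] Lk_def[symmetric] by (simp add: field_simps)
qed

lemma compact_finite_net:
  fixes X :: "'a::metric_space set"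
  assumes X: "compact X" and r: "0 < r"
  shows "\<exists>ds. set ds \<subseteq> X \<and> (\<forall>z\<in>X. \<exists>i<length ds. dist (ds ! i) z < r)"
proof -
  have cover: "X \<subseteq> (\<Union>c\<in>X. ball c r)"
    using r by auto
  obtain C where C: "C \<subseteq> X" "finite C" "X \<subseteq> (\<Union>c\<in>C. ball c r)"
    using compactE_image[OF X, of X "\<lambda>c. ball c r"] cover by auto
  obtain ds where ds: "set ds = C"
    using finite_list[OF C(2)] by blast
  have "\<exists>i<length ds. dist (ds ! i) z < r" if z: "z \<in> X" for z
  proof -
    obtain c where "c \<in> set ds" "dist c z < r"
      using C(3) z ds by auto
    then show ?thesis
      by (metis in_set_conv_nth)
  qed
  with C(1) ds show ?thesis by blast
qed

lemma abs_floor_mult_divide_le: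
  fixes a s :: real
  assumes s: "0 < s"
  shows "\<bar>of_int \<lfloor>a * s\<rfloor> / s - a\<bar> \<le> 1 / s"
proof -
  have "\<bar>of_int \<lfloor>a * s\<rfloor> - a * s\<bar> \<le> 1"
    using of_int_floor_le[of "a * s"] real_of_int_floor_gt_diff_one[of "a * s"] by linarith
  moreover have "of_int \<lfloor>a * s\<rfloor> / s - a = (of_int \<lfloor>a * s\<rfloor> - a * s) / s"
    using s by (simp add: field_simps)
  ultimately show ?thesis
    using s by (simp add: abs_divide divide_right_mono)
qed

text \<open>Expert \<open>(m, js)\<close> is a step function: it takes the value \<open>js ! i / (m + 1)\<close> near the
  \<open>i\<close>-th point of a fixed \<open>1/(m + 1)\<close>-net of \<open>X\<close>; there are countably many such pairs.\<close>
lemma compact_uniformly_dense_sequence: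
  fixes X :: "'a::metric_space set"
  assumes X: "compact X"
  shows "\<exists>e :: nat \<Rightarrow> 'a \<Rightarrow> real.
           \<forall>F. continuous_on X F \<longrightarrow> (\<forall>\<delta>>0. \<exists>k. \<forall>z\<in>X. \<bar>e k z - F z\<bar> \<le> \<delta>)"
proof -
  have "\<forall>m. \<exists>ds. set ds \<subseteq> X \<and> (\<forall>z\<in>X. \<exists>i<length ds. dist (ds ! i) z < 1 / real (Suc m))"
    using compact_finite_net[OF X] by simp
  then have "\<exists>ds. \<forall>m. set (ds m) \<subseteq> X \<and> (\<forall>z\<in>X. \<exists>i<length (ds m). dist (ds m ! i) z < 1 / real (Suc m))"
    by (rule choice)
  then obtain ds where ds: "\<And>m. set (ds m) \<subseteq> X"
    and net: "\<And>m z. z \<in> X \<Longrightarrow> \<exists>i<length (ds m). dist (ds m ! i) z < 1 / real (Suc m)"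
    by blast
  define near where "near m z = (SOME i. i < length (ds m) \<and> dist (ds m ! i) z < 1 / real (Suc m))"
    for m z
  have near: "near m z < length (ds m)" "dist (ds m ! near m z) z < 1 / real (Suc m)"
    if "z \<in> X" for m z
    using someI_ex[OF net[OF that, of m]] by (simp_all add: near_def)
  define e where "e k z = (case from_nat k :: nat \<times> int list of
                             (m, js) \<Rightarrow> of_int (js ! near m z) / real (Suc m))" for k z
  have "\<exists>k. \<forall>z\<in>X. \<bar>e k z - F z\<bar> \<le> \<delta>" if F: "continuous_on X F" and \<delta>: "0 < \<delta>" for F \<delta>
  proof -
    have "\<exists>r>0. \<forall>z\<in>X. \<forall>z'\<in>X. dist z' z < r \<longrightarrow> dist (F z') (F z) < \<delta>/2"
      using compact_uniformly_continuous[OF F X] half_gt_zero[OF \<delta>]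
      unfolding uniformly_continuous_on_def by blast
    then obtain r where r: "0 < r" "\<And>z z'. z \<in> X \<Longrightarrow> z' \<in> X \<Longrightarrow> dist z' z < r \<Longrightarrow> dist (F z') (F z) < \<delta>/2"
      by blast
    obtain m where m: "1 / real (Suc m) < min r (\<delta>/2)"
      using reals_Archimedean[of "min r (\<delta>/2)"] r \<delta> by (auto simp: inverse_eq_divide)
    define s where "s = real (Suc m)"
    define js where "js = map (\<lambda>d. \<lfloor>F d * s\<rfloor>) (ds m)"
    have "\<bar>e (to_nat (m, js)) z - F z\<bar> \<le> \<delta>" if z: "z \<in> X" for z
    proof -
      define d where "d = ds m ! near m z"
      have d: "d \<in> X" "dist d z < r"
        using near[OF z, of m] ds[of m] m by (auto simp: d_def)
      have "e (to_nat (m, js)) z = of_int \<lfloor>F d * s\<rfloor> / s"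
        using near(1)[OF z] by (simp add: e_def js_def d_def s_def)
      moreover have "\<bar>of_int \<lfloor>F d * s\<rfloor> / s - F d\<bar> \<le> 1 / s"
        by (rule abs_floor_mult_divide_le) (simp add: s_def)
      moreover have "\<bar>F d - F z\<bar> < \<delta>/2"
        using r(2)[OF z d(1) d(2)] by (simp add: dist_real_def)
      moreover have "1 / s < \<delta>/2"
        using m by (simp add: s_def)
      ultimately show ?thesis
        unfolding abs_le_iff abs_less_iff by linarith
    qed
    then show ?thesis by blast
  qed
  then show ?thesis by blast
qed

definition clip :: "real \<Rightarrow> real \<Rightarrow> real" where
  "clip Y v = max (- Y) (min Y v)"

lemma abs_clip_le: "0 \<le> Y \<Longrightarrow> \<bar>clip Y v\<bar> \<le> Y"
  by (auto simp: clip_def)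

lemma square_loss_clip_le: "\<bar>y\<bar> \<le> Y \<Longrightarrow> (y - clip Y v)^2 \<le> (y - v)^2"
  unfolding clip_def by (rule abs_le_square_iff[THEN iffD1]) auto

lemma square_loss_le_perturb:
  fixes y a b :: real
  assumes y: "\<bar>y\<bar> \<le> Y" and b: "\<bar>b\<bar> \<le> M" and ab: "\<bar>a - b\<bar> \<le> \<delta>"
  shows "(y - a)^2 \<le> (y - b)^2 + \<delta> * (2 * Y + 2 * M + \<delta>)"
proof -
  have "(y - a)^2 - (y - b)^2 = (b - a) * (2 * y - a - b)"
    by (simp add: power2_eq_square algebra_simps)
  also have "\<dots> \<le> \<bar>b - a\<bar> * \<bar>2 * y - a - b\<bar>"
    by (metis abs_ge_self abs_mult)
  also have "\<dots> \<le> \<delta> * (2 * Y + 2 * M + \<delta>)"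
  proof (rule mult_mono)
    show "\<bar>2 * y - a - b\<bar> \<le> 2 * Y + 2 * M + \<delta>"
      using y b ab by (simp add: abs_le_iff)
  qed (use ab in \<open>simp_all add: abs_minus_commute\<close>)
  finally show ?thesis by simp
qed

lemma limsup_average_nonpos:
  fixes d :: "nat \<Rightarrow> real"
  assumes "\<And>\<epsilon>. 0 < \<epsilon> \<Longrightarrow> \<exists>C. \<forall>N. d N \<le> \<epsilon> * real N + C"
  shows "limsup (\<lambda>N. ereal (d N / real N)) \<le> 0"
proof (rule ereal_le_epsilon2)
  fix \<epsilon> :: real
  assume \<epsilon>: "0 < \<epsilon>"
  then obtain C where C: "\<And>N. d N \<le> \<epsilon>/2 * real N + C"
    using assms[of "\<epsilon>/2"] by auto
  obtain N0 :: nat where "C / (\<epsilon>/2) < real N0"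
    using reals_Archimedean2 by blast
  then have N0: "C < \<epsilon>/2 * real N0"
    using \<epsilon> by (simp add: pos_divide_less_eq mult.commute)
  have "eventually (\<lambda>N. ereal (d N / real N) \<le> ereal \<epsilon>) sequentially"
  proof (rule eventually_sequentiallyI[of "Suc N0"])
    fix N :: nat
    assume N: "Suc N0 \<le> N"
    have "\<epsilon>/2 * real N0 \<le> \<epsilon>/2 * real N"
      using N \<epsilon> by (intro mult_left_mono) auto
    with N0 C[of N] have "d N \<le> \<epsilon> * real N" by linarith
    with N show "ereal (d N / real N) \<le> ereal \<epsilon>"
      by (simp add: pos_divide_le_eq)
  qed
  then have "limsup (\<lambda>N. ereal (d N / real N)) \<le> ereal \<epsilon>"
    by (rule Limsup_bounded)
  then show "limsup (\<lambda>N. ereal (d N / real N)) \<le> 0 + ereal \<epsilon>"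
    by simp
qed

lemma aggregating_predictor_competitive:
  fixes X :: "'a::metric_space set" and e :: "nat \<Rightarrow> 'a \<Rightarrow> real"
  assumes X: "compact X" and Y: "0 < Y"
    and dense: "\<forall>F. continuous_on X F \<longrightarrow> (\<forall>\<delta>>0. \<exists>k. \<forall>z\<in>X. \<bar>e k z - F z\<bar> \<le> \<delta>)"
    and F: "continuous_on X F" and x: "\<And>n. x n \<in> X" and y: "\<And>n. \<bar>y n\<bar> \<le> Y"
    and \<epsilon>: "0 < \<epsilon>"
  defines "P \<equiv> aggregating_predictor (1 / (64 * Y^2)) (\<lambda>k z. clip Y (e k z))"
  shows "\<exists>C. \<forall>N. (\<Sum>n<N. (y n - pred_at P x y n)^2) - (\<Sum>n<N. (y n - F (x n))^2) \<le> \<epsilon> * real N + C"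
proof -
  obtain M where M: "0 < M" "\<And>z. z \<in> X \<Longrightarrow> \<bar>F z\<bar> \<le> M"
    using compact_imp_bounded[OF compact_continuous_image[OF F X]] by (auto simp: bounded_pos)
  define \<delta> where "\<delta> = min 1 (\<epsilon> / (2 * Y + 2 * M + 1))"
  have \<delta>: "0 < \<delta>" "\<delta> * (2 * Y + 2 * M + \<delta>) \<le> \<epsilon>"
  proof -
    show "0 < \<delta>" using \<epsilon> Y M by (simp add: \<delta>_def)
    then have "\<delta> * (2 * Y + 2 * M + \<delta>) \<le> \<delta> * (2 * Y + 2 * M + 1)"
      by (simp add: \<delta>_def)
    also have "\<dots> \<le> \<epsilon>"
      using Y M by (simp add: \<delta>_def pos_le_divide_eq[symmetric])
    finally show "\<delta> * (2 * Y + 2 * M + \<delta>) \<le> \<epsilon>" .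
  qed
  obtain k where k: "\<And>z. z \<in> X \<Longrightarrow> \<bar>e k z - F z\<bar> \<le> \<delta>"
    using dense F \<delta>(1) by blast
  have per_round: "(y n - clip Y (e k (x n)))^2 \<le> (y n - F (x n))^2 + \<epsilon>" for n
    using square_loss_clip_le[OF y, of n "e k (x n)"] square_loss_le_perturb[OF y M(2) k, OF x x, of n n] \<delta>(2)
    by linarith
  define C where "C = real (Suc k) * ln 2 / (1 / (64 * Y^2))"
  have "(\<Sum>n<N. (y n - pred_at P x y n)^2) \<le> (\<Sum>n<N. (y n - F (x n))^2) + \<epsilon> * real N + C" for N
  proof -
    have "(\<Sum>n<N. (y n - pred_at P x y n)^2) \<le> (\<Sum>n<N. (y n - clip Y (e k (x n)))^2) + C"
      unfolding P_def C_def using Y y abs_clip_le by (intro aggregating_predictor_regret) auto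
    also have "\<dots> \<le> (\<Sum>n<N. (y n - F (x n))^2 + \<epsilon>) + C"
      by (intro add_right_mono sum_mono per_round)
    finally show ?thesis by (simp add: sum.distrib mult.commute)
  qed
  then show ?thesis by (intro exI[of _ C]) (auto simp: algebra_simps)
qed

theorem theorem1:
  fixes X :: "'a::metric_space set" and Y :: real
  assumes "compact X" and "Y > 0"
  shows "\<exists>P :: 'a predictor.
           \<forall>F. continuous_on X F \<longrightarrow>
             (\<forall>x y. (\<forall>n. x n \<in> X \<and> \<bar>y n\<bar> \<le> Y) \<longrightarrow>
                limsup (\<lambda>N. ereal ((\<Sum>n<N. (y n - pred_at P x y n)^2) / real N
                                   - (\<Sum>n<N. (y n - F (x n))^2) / real N)) \<le> 0)"
proof -
  obtain e :: "nat \<Rightarrow> 'a \<Rightarrow> real"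
    where dense: "\<forall>F. continuous_on X F \<longrightarrow> (\<forall>\<delta>>0. \<exists>k. \<forall>z\<in>X. \<bar>e k z - F z\<bar> \<le> \<delta>)"
    using compact_uniformly_dense_sequence[OF assms(1)] by blast
  define P where "P = aggregating_predictor (1 / (64 * Y^2)) (\<lambda>k z. clip Y (e k z))"
  have "limsup (\<lambda>N. ereal (((\<Sum>n<N. (y n - pred_at P x y n)^2) - (\<Sum>n<N. (y n - F (x n))^2))
                            / real N)) \<le> 0"
    if "continuous_on X F" "\<forall>n. x n \<in> X \<and> \<bar>y n\<bar> \<le> Y" for F x y
    using aggregating_predictor_competitive[OF assms dense] that unfolding P_def
    by (intro limsup_average_nonpos) blast
  then show ?thesis
    by (intro exI[of _ P]) (simp add: diff_divide_distrib)
qed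

end
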